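(* Let $f(z)=z+\sum_{n\ge 2}a_nz^n\in\mathcal{BT}_{\mathfrak{B}}$ and let $\gamma_1,\gamma_2$ be its logarithmic coefficients. Then $$-\frac{1}{2\sqrt{23}}\le|\gamma_2|-|\gamma_1|\le\frac1{12}.$$ Both inequalities are sharp: the upper bound is attained by $f_2(z)=\int_0^z\sqrt{1+\tanh(t^2)}\,dt$, and the lower bound by the function $f$ with $f(0)=0$, $f'(z)=\sqrt{1+\tanh(\omega(z))}$, where $\omega=\frac{p-1}{p+1}$ and $p(z)=\dfrac{1+\frac{8}{\sqrt{23}}z+z^2}{1-z^2}$.
   Context: $\mathbb{D}=\{z\in\mathbb{C}:|z|<1\}$. $\mathcal{S}$ is the class of univalent analytic functions $f$ on $\mathbb{D}$ normalized by $f(0)=0$, $f'(0)=1$, i.e. $f(z)=z+\sum_{n\ge2}a_nz^n$. For analytic $g,h$ on $\mathbb{D}$, $g\prec h$ means there is an analytic $\omega:\mathbb{D}\to\mathbb{D}$ with $\omega(0)=0$ and $g=h\circ\omega$. Let $\mathfrak{B}(z)=\sqrt{1+\tanh z}$ (principal branch, $\mathfrak{B}(0)=1$). The class $\mathcal{BT}_{\mathfrak{B}}$ is $\{f\in\mathcal{S}: f'(z)\prec \mathfrak{B}(z)\}$. The logarithmic coefficients are defined by $\log\frac{f(z)}{z}=2\sum_{n\ge1}\gamma_nz^n$; explicitly $\gamma_1=\tfrac12 a_2$, $\gamma_2=\tfrac12(a_3-\tfrac12a_2^2)$. *)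

theory Defs
  imports "HOL-Complex_Analysis.Complex_Analysis"
begin

abbreviation unit_disc :: "complex set" where
  "unit_disc \<equiv> ball 0 1"

definition taylor_coeff :: "(complex \<Rightarrow> complex) \<Rightarrow> nat \<Rightarrow> complex" where
  "taylor_coeff f n = (deriv ^^ n) f 0 / of_nat (fact n)"

definition class_S :: "(complex \<Rightarrow> complex) set" where
  "class_S = {f. f holomorphic_on unit_disc \<and> inj_on f unit_disc \<and> f 0 = 0 \<and> deriv f 0 = 1}"

definition subordinate :: "(complex \<Rightarrow> complex) \<Rightarrow> (complex \<Rightarrow> complex) \<Rightarrow> bool" where
  "subordinate g h \<longleftrightarrow> (\<exists>\<omega>. \<omega> holomorphic_on unit_disc \<and> \<omega> ` unit_disc \<subseteq> unit_disc \<and>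
      \<omega> 0 = 0 \<and> (\<forall>z\<in>unit_disc. g z = h (\<omega> z)))"

definition frakB :: "complex \<Rightarrow> complex" where
  "frakB z = csqrt (1 + tanh z)"

definition class_BT :: "(complex \<Rightarrow> complex) set" where
  "class_BT = {f \<in> class_S. subordinate (deriv f) frakB}"

definition log_gamma1 :: "(complex \<Rightarrow> complex) \<Rightarrow> complex" where
  "log_gamma1 f = taylor_coeff f 2 / 2"

definition log_gamma2 :: "(complex \<Rightarrow> complex) \<Rightarrow> complex" where
  "log_gamma2 f = (taylor_coeff f 3 - (taylor_coeff f 2)^2 / 2) / 2"

end

theory Submission
  imports Defs
begin

text \<open>Write \<open>f' = frakB \<circ> \<omega>\<close> with a Schwarz function \<open>\<omega>(z) = c\<^sub>1 z + c\<^sub>2 z\<^sup>2 + \<dots>\<close>.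
Since \<open>frakB(w) = 1 + w/2 - w\<^sup>2/8 + \<dots>\<close>, comparing coefficients gives
\<open>\<gamma>\<^sub>1 = c\<^sub>1/8\<close> and \<open>\<gamma>\<^sub>2 = c\<^sub>2/12 - 7 c\<^sub>1\<^sup>2/192\<close>. Schwarz--Pick applied to \<open>\<omega>(z)/z\<close> gives
\<open>|c\<^sub>2| \<le> 1 - |c\<^sub>1|\<^sup>2\<close>, and with \<open>x = |c\<^sub>1|\<close> the triangle inequality reduces both bounds to
\<open>max 0 ((23x\<^sup>2 - 16)/192) - x/8 \<ge> -1/(2\<surd>23)\<close> and \<open>(16 - 9x\<^sup>2)/192 - x/8 \<le> 1/12\<close>;
the minimum is at \<open>x = 4/\<surd>23\<close>, where \<open>\<gamma>\<^sub>2 = 0\<close>.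
Conversely \<open>Re frakB > 0\<close> on the disc, so every primitive of \<open>frakB \<circ> \<omega>\<close> is univalent
(Noshiro--Warschawski) and lies in the class; \<open>\<omega>(z) = z\<^sup>2\<close> and
\<open>\<omega>(z) = z (z + b)/(1 + b z)\<close> with \<open>b = 4/\<surd>23\<close> attain the two bounds.\<close>

lemma exp_notin_nonpos_Reals:
  assumes "\<bar>Im z\<bar> < pi" shows "exp z \<notin> \<real>\<^sub>\<le>\<^sub>0"
proof
  assume "exp z \<in> \<real>\<^sub>\<le>\<^sub>0"
  then have "Re (exp z) \<le> 0" "Im (exp z) = 0" by (auto simp: complex_nonpos_Reals_iff)
  then have "sin (Im z) = 0" "cos (Im z) \<le> 0" by (simp_all add: Im_exp Re_exp mult_le_0_iff)
  then have "Im z = 0" using assms sin_eq_0_pi by (metis abs_less_iff minus_less_iff)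
  with \<open>cos (Im z) \<le> 0\<close> show False by simp
qed

lemma cosh_eq_exp_mult: "cosh (z::complex) = exp z * (1 + exp (-2 * z)) / 2"
proof -
  have "exp z * exp (-2 * z) = exp (-z)" by (simp flip: exp_add)
  then show ?thesis by (simp add: cosh_def scaleR_conv_of_real distrib_left)
qed

lemma one_plus_exp_neq_0:
  assumes "\<bar>Im z\<bar> < pi" shows "1 + exp z \<noteq> 0"
proof
  assume "1 + exp z = 0"
  then have "exp z \<in> \<real>\<^sub>\<le>\<^sub>0" by (simp add: add_eq_0_iff complex_nonpos_Reals_iff)
  with exp_notin_nonpos_Reals[OF assms] show False by blast
qed

lemma cosh_neq_0_if_abs_Im_less:
  assumes "\<bar>Im z\<bar> < pi / 2" shows "cosh (z::complex) \<noteq> 0"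
  using one_plus_exp_neq_0[of "-2 * z"] assms by (simp add: cosh_eq_exp_mult)

lemma one_plus_tanh_eq:
  assumes "cosh (z::complex) \<noteq> 0" shows "1 + tanh z = 2 / (1 + exp (-2 * z))"
proof -
  have "1 + tanh z = (cosh z + sinh z) / cosh z"
    using assms by (simp add: tanh_def field_simps)
  also have "\<dots> = exp z / cosh z" by (simp add: cosh_plus_sinh)
  finally show ?thesis by (simp add: cosh_eq_exp_mult)
qed

lemma one_plus_tanh_notin_nonpos_Reals:
  assumes "\<bar>Im z\<bar> < pi / 2" shows "1 + tanh z \<notin> \<real>\<^sub>\<le>\<^sub>0"
proof
  assume "1 + tanh z \<in> \<real>\<^sub>\<le>\<^sub>0"
  then obtain t where t: "t \<le> 0" "2 / (1 + exp (-2 * z)) = of_real t"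
    using one_plus_tanh_eq[OF cosh_neq_0_if_abs_Im_less[OF assms]] nonpos_Reals_cases by metis
  have nz: "1 + exp (-2 * z) \<noteq> 0" using assms by (intro one_plus_exp_neq_0) simp
  with t have "t \<noteq> 0" by auto
  with t nz have "exp (-2 * z) = of_real (2 / t - 1)"
    by (simp add: field_simps)
  moreover have "exp (-2 * z) \<notin> \<real>\<^sub>\<le>\<^sub>0" using assms by (intro exp_notin_nonpos_Reals) simp
  moreover have "2 / t - 1 \<le> 0" using \<open>t \<le> 0\<close> by (smt (verit) divide_nonneg_nonpos)
  ultimately show False by (metis nonpos_Reals_of_real_iff)
qed

lemma abs_Im_less_pi_half: "norm z < 1 \<Longrightarrow> \<bar>Im z\<bar> < pi / 2"
  using abs_Im_le_cmod[of z] pi_gt3 by linarith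

lemma frakB_has_field_derivative:
  assumes "\<bar>Im z\<bar> < pi / 2"
  shows "(frakB has_field_derivative (1 - tanh z ^ 2) / (2 * frakB z)) (at z)"
  unfolding frakB_def[abs_def] using assms
  by (auto intro!: derivative_eq_intros cosh_neq_0_if_abs_Im_less one_plus_tanh_notin_nonpos_Reals)

lemma frakB_holomorphic: "frakB holomorphic_on unit_disc"
  unfolding holomorphic_on_open[OF open_ball]
  using frakB_has_field_derivative abs_Im_less_pi_half by (metis mem_ball_0)

lemma frakB_0 [simp]: "frakB 0 = 1"
  by (simp add: frakB_def)

lemma deriv_frakB: "norm z < 1 \<Longrightarrow> deriv frakB z = (1 - tanh z ^ 2) / (2 * frakB z)"
  by (intro DERIV_imp_deriv frakB_has_field_derivative abs_Im_less_pi_half)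

lemma deriv_frakB_0: "deriv frakB 0 = 1 / 2"
  by (simp add: deriv_frakB)

lemma deriv2_frakB_0: "deriv (deriv frakB) 0 = - 1 / 4"
proof -
  have "\<forall>\<^sub>F z in nhds 0. deriv frakB z = (1 - tanh z ^ 2) / (2 * frakB z)"
    using eventually_nhds_in_open[of unit_disc 0] by (auto elim!: eventually_mono simp: deriv_frakB)
  moreover have "((\<lambda>z. (1 - tanh z ^ 2) / (2 * frakB z)) has_field_derivative - 1 / 4) (at 0)"
  proof -
    have num: "((\<lambda>z. 1 - tanh z ^ 2) has_field_derivative 0) (at 0)"
      by (auto intro!: derivative_eq_intros)
    have "((\<lambda>z. 2 * frakB z) has_field_derivative 1) (at 0)"
      using DERIV_cmult[OF frakB_has_field_derivative[of 0], of 2] by simp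
    from DERIV_divide[OF num this] show ?thesis by simp
  qed
  ultimately show ?thesis
    using deriv_cong_ev[OF _ refl] DERIV_imp_deriv by metis
qed

lemma Re_csqrt_pos:
  assumes "z \<notin> \<real>\<^sub>\<le>\<^sub>0" shows "Re (csqrt z) > 0"
proof (rule ccontr)
  assume "\<not> Re (csqrt z) > 0"
  then have "Re (csqrt z) = 0" using Re_csqrt[of z] by linarith
  then have "(csqrt z)\<^sup>2 = of_real (- (Im (csqrt z))\<^sup>2)"
    by (simp add: complex_eq_iff power2_eq_square)
  then have "z = of_real (- (Im (csqrt z))\<^sup>2)" by simp
  with assms show False by (metis nonpos_Reals_of_real_iff neg_le_0_iff_le zero_le_power2)
qed

lemma Re_frakB_pos: "norm z < 1 \<Longrightarrow> Re (frakB z) > 0"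
  unfolding frakB_def by (intro Re_csqrt_pos one_plus_tanh_notin_nonpos_Reals abs_Im_less_pi_half)

text \<open>Noshiro--Warschawski: \<open>Re ((f b - f a) / (b - a))\<close> is a value of \<open>Re f'\<close> on the segment.\<close>
lemma inj_on_if_Re_deriv_pos:
  assumes "convex S" and f': "\<And>z. z \<in> S \<Longrightarrow> (f has_field_derivative f' z) (at z)"
    and pos: "\<And>z. z \<in> S \<Longrightarrow> Re (f' z) > 0"
  shows "inj_on f S"
proof (rule inj_onI, rule ccontr)
  fix a b assume "a \<in> S" "b \<in> S" "f a = f b" "a \<noteq> b"
  have "closed_segment a b \<subseteq> S" using \<open>convex S\<close> \<open>a \<in> S\<close> \<open>b \<in> S\<close> by (simp add: closed_segment_subset)
  then obtain u where u: "u \<in> S" and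
    "Re (f b / (b - a)) - Re (f a / (b - a)) = Re (f' u / (b - a) * (b - a))"
    using complex_mvt_line[of a b "\<lambda>z. f z / (b - a)" "\<lambda>z. f' z / (b - a)"] f'
    by (metis DERIV_cdivide subsetD)
  then have "Re (f' u) = 0" using \<open>f a = f b\<close> \<open>a \<noteq> b\<close> by simp
  with pos[OF u] show False by simp
qed

definition schwarz_function :: "(complex \<Rightarrow> complex) \<Rightarrow> bool" where
  "schwarz_function w \<longleftrightarrow> w holomorphic_on unit_disc \<and> w ` unit_disc \<subseteq> unit_disc \<and> w 0 = 0"

lemma subordinate_iff_schwarz_function:
  "subordinate g h \<longleftrightarrow> (\<exists>w. schwarz_function w \<and> (\<forall>z\<in>unit_disc. g z = h (w z)))"
  by (auto simp: subordinate_def schwarz_function_def)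

lemma deriv_times_id_0:
  assumes "open S" "0 \<in> S" and h: "h holomorphic_on S" and w: "\<And>z. z \<in> S \<Longrightarrow> w z = z * h z"
  shows "deriv w 0 = h 0" and "deriv (deriv w) 0 = 2 * deriv h 0"
proof -
  have ev: "\<forall>\<^sub>F z in nhds 0. z \<in> S" using eventually_nhds_in_open assms(1,2) by blast
  have dh: "(h has_field_derivative deriv h z) (at z)" if "z \<in> S" for z
    using holomorphic_derivI[OF h \<open>open S\<close> that] .
  have ddh: "(deriv h has_field_derivative deriv (deriv h) z) (at z)" if "z \<in> S" for z
    using holomorphic_derivI[OF holomorphic_deriv[OF h \<open>open S\<close>] \<open>open S\<close> that] .
  have dw: "deriv w z = h z + z * deriv h z" if "z \<in> S" for z
  proof -
    have "\<forall>\<^sub>F z in nhds z. w z = z * h z"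
      using eventually_nhds_in_open[OF \<open>open S\<close> that] by (auto elim!: eventually_mono simp: w)
    then have "deriv w z = deriv (\<lambda>z. z * h z) z" by (rule deriv_cong_ev) simp
    also have "\<dots> = h z + z * deriv h z"
      by (rule DERIV_imp_deriv) (auto intro!: derivative_eq_intros dh that)
    finally show ?thesis .
  qed
  show "deriv w 0 = h 0" using dw[OF \<open>0 \<in> S\<close>] by simp
  have "deriv (deriv w) 0 = deriv (\<lambda>z. h z + z * deriv h z) 0"
    by (rule deriv_cong_ev) (use ev dw in \<open>auto elim!: eventually_mono\<close>)
  also have "\<dots> = 2 * deriv h 0"
    by (rule DERIV_imp_deriv) (auto intro!: derivative_eq_intros dh ddh \<open>0 \<in> S\<close>)
  finally show "deriv (deriv w) 0 = 2 * deriv h 0" .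
qed

lemma Moebius_function_has_field_derivative:
  assumes "1 - cnj a * z \<noteq> 0"
  shows "(Moebius_function 0 a has_field_derivative (1 - cnj a * a) / (1 - cnj a * z) ^ 2) (at z)"
  unfolding Moebius_function_simple[abs_def] using assms
  by (auto intro!: derivative_eq_intros simp: field_simps power2_eq_square)

lemma Schwarz_Pick_0:
  assumes g: "g holomorphic_on unit_disc" "g ` unit_disc \<subseteq> unit_disc"
  shows "norm (deriv g 0) \<le> 1 - norm (g 0) ^ 2"
proof -
  define c where "c = g 0"
  have c: "norm c < 1" using g(2) unfolding c_def by (simp add: image_subset_iff)
  have cc: "1 - cnj c * c = of_real (1 - (norm c)\<^sup>2)"
    by (metis complex_norm_square mult.commute of_real_1 of_real_diff of_real_power)
  have pos: "1 - (norm c)\<^sup>2 > 0" using c by (simp add: abs_square_less_1)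
  define \<phi> where "\<phi> = Moebius_function 0 c \<circ> g"
  have "\<phi> holomorphic_on unit_disc"
    unfolding \<phi>_def using Moebius_function_holomorphic[OF c] g
    by (intro holomorphic_on_compose_gen) auto
  moreover have "\<phi> 0 = 0" by (simp add: \<phi>_def c_def Moebius_function_eq_zero)
  moreover have "norm (\<phi> z) < 1" if "norm z < 1" for z
    using Moebius_function_norm_lt_1[OF c] g(2) that by (force simp: \<phi>_def)
  ultimately have "norm (deriv \<phi> 0) \<le> 1" by (rule Schwarz_Lemma(2)[where \<xi> = 0]) simp_all
  moreover have "deriv \<phi> 0 = deriv g 0 / (1 - cnj c * c)"
  proof (rule DERIV_imp_deriv)
    have "1 - cnj c * c \<noteq> 0" using cc pos by (metis of_real_eq_0_iff less_irrefl)
    then have d: "1 - cnj c * g 0 \<noteq> 0" by (simp add: c_def)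
    have "(g has_field_derivative deriv g 0) (at 0)"
      using holomorphic_derivI[OF g(1) open_ball, of 0] by simp
    from DERIV_chain[OF Moebius_function_has_field_derivative[OF d] this]
    show "(\<phi> has_field_derivative deriv g 0 / (1 - cnj c * c)) (at 0)"
      using d by (simp add: \<phi>_def c_def power2_eq_square)
  qed
  moreover have "norm (1 - cnj c * c) = 1 - (norm c)\<^sup>2" unfolding cc using pos by (simp only: norm_of_real)
  ultimately have "norm (deriv g 0) / (1 - (norm c)\<^sup>2) \<le> 1" by (simp add: norm_divide)
  with pos show ?thesis by (simp add: c_def field_simps)
qed

lemma schwarz_function_second_coeff:
  assumes "schwarz_function w"
  shows "norm (deriv (deriv w) 0 / 2) \<le> 1 - norm (deriv w 0) ^ 2"
proof -
  have holw: "w holomorphic_on unit_disc" and w0: "w 0 = 0"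
    and wd: "\<And>z. norm z < 1 \<Longrightarrow> norm (w z) < 1"
    using assms by (auto simp: schwarz_function_def image_subset_iff)
  obtain h where holh: "h holomorphic_on unit_disc" and wh: "\<And>z. norm z < 1 \<Longrightarrow> w z = z * h z"
    and h0: "deriv w 0 = h 0"
    using Schwarz3[OF holw w0] by blast
  have dd: "deriv (deriv w) 0 = 2 * deriv h 0"
    using deriv_times_id_0(2)[OF open_ball _ holh] wh by simp
  txt \<open>Either \<open>w\<close> is a rotation, or \<open>h = w(z)/z\<close> maps the disc into itself.\<close>
  show ?thesis
  proof (cases "(\<exists>z. norm z < 1 \<and> z \<noteq> 0 \<and> norm (w z) = norm z) \<or> norm (deriv w 0) = 1")
    case True
    then obtain \<alpha> where lin: "\<And>z. norm z < 1 \<Longrightarrow> w z = z * \<alpha>" and "norm \<alpha> = 1"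
      using Schwarz_Lemma(3)[OF holw w0 wd, of 0] by (auto simp: mult.commute)
    then have "deriv w 0 = \<alpha>" "deriv (deriv w) 0 = 0"
      using deriv_times_id_0[of unit_disc "\<lambda>_. \<alpha>" w] lin by simp_all
    with \<open>norm \<alpha> = 1\<close> show ?thesis by simp
  next
    case strict: False
    have "norm (h z) < 1" if "norm z < 1" for z
    proof (cases "z = 0")
      case True
      with strict Schwarz_Lemma(2)[OF holw w0 wd, of 0] h0 show ?thesis by auto
    next
      case False
      with strict that Schwarz_Lemma(1)[OF holw w0 wd that] have "norm (w z) < norm z" by auto
      with False that show ?thesis by (simp add: wh norm_mult)
    qed
    then have "norm (deriv h 0) \<le> 1 - norm (h 0) ^ 2"
      by (intro Schwarz_Pick_0 holh) auto
    then show ?thesis by (simp add: dd h0 norm_mult)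
  qed
qed

lemma taylor_coeffs_of_deriv_comp:
  assumes \<phi>: "\<phi> holomorphic_on unit_disc" and w: "schwarz_function w"
    and f': "\<And>z. z \<in> unit_disc \<Longrightarrow> deriv f z = \<phi> (w z)"
  shows "taylor_coeff f 2 = deriv \<phi> 0 * deriv w 0 / 2"
    and "taylor_coeff f 3 = (deriv (deriv \<phi>) 0 * (deriv w 0)\<^sup>2 + deriv \<phi> 0 * deriv (deriv w) 0) / 6"
proof -
  have holw: "w holomorphic_on unit_disc" and w0: "w 0 = 0" and wd: "\<And>z. z \<in> unit_disc \<Longrightarrow> w z \<in> unit_disc"
    using w by (auto simp: schwarz_function_def image_subset_iff)
  have dw: "(w has_field_derivative deriv w z) (at z)" if "z \<in> unit_disc" for z
    using holomorphic_derivI[OF holw open_ball that] .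
  have ddw: "(deriv w has_field_derivative deriv (deriv w) z) (at z)" if "z \<in> unit_disc" for z
    using holomorphic_derivI[OF holomorphic_deriv[OF holw open_ball] open_ball that] .
  have d\<phi>: "(\<phi> has_field_derivative deriv \<phi> z) (at z)" if "z \<in> unit_disc" for z
    using holomorphic_derivI[OF \<phi> open_ball that] .
  have dd\<phi>: "(deriv \<phi> has_field_derivative deriv (deriv \<phi>) z) (at z)" if "z \<in> unit_disc" for z
    using holomorphic_derivI[OF holomorphic_deriv[OF \<phi> open_ball] open_ball that] .
  have f'': "deriv (deriv f) z = deriv \<phi> (w z) * deriv w z" if z: "z \<in> unit_disc" for z
  proof -
    have "\<forall>\<^sub>F z in nhds z. deriv f z = \<phi> (w z)"
      using eventually_nhds_in_open[OF open_ball z] by (auto elim!: eventually_mono simp: f')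
    then have "deriv (deriv f) z = deriv (\<lambda>z. \<phi> (w z)) z" by (rule deriv_cong_ev) simp
    also have "\<dots> = deriv \<phi> (w z) * deriv w z"
      by (rule DERIV_imp_deriv DERIV_chain2 d\<phi> wd dw z)+
    finally show ?thesis .
  qed
  have "(deriv ^^ 2) f 0 = deriv \<phi> 0 * deriv w 0"
    using f''[of 0] w0 by (simp add: numeral_2_eq_2)
  then show "taylor_coeff f 2 = deriv \<phi> 0 * deriv w 0 / 2"
    by (simp add: taylor_coeff_def)
  have "\<forall>\<^sub>F z in nhds 0. deriv (deriv f) z = deriv \<phi> (w z) * deriv w z"
    using eventually_nhds_in_open[of unit_disc 0] by (auto elim!: eventually_mono simp: f'')
  then have "(deriv ^^ 3) f 0 = deriv (\<lambda>z. deriv \<phi> (w z) * deriv w z) 0"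
    by (simp add: numeral_3_eq_3 deriv_cong_ev)
  also have "\<dots> = deriv (deriv \<phi>) 0 * (deriv w 0)\<^sup>2 + deriv \<phi> 0 * deriv (deriv w) 0"
  proof (rule DERIV_imp_deriv)
    have "(deriv \<phi> has_field_derivative deriv (deriv \<phi>) 0) (at (w 0))"
      using dd\<phi>[of 0] w0 by simp
    from DERIV_chain2[OF this dw[of 0, simplified]]
    have "((\<lambda>z. deriv \<phi> (w z)) has_field_derivative deriv (deriv \<phi>) 0 * deriv w 0) (at 0)" .
    from DERIV_mult[OF this ddw[of 0, simplified]]
    show "((\<lambda>z. deriv \<phi> (w z) * deriv w z) has_field_derivative
          deriv (deriv \<phi>) 0 * (deriv w 0)\<^sup>2 + deriv \<phi> 0 * deriv (deriv w) 0) (at 0)"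
      using w0 by (simp add: power2_eq_square algebra_simps)
  qed
  finally show "taylor_coeff f 3 = (deriv (deriv \<phi>) 0 * (deriv w 0)\<^sup>2 + deriv \<phi> 0 * deriv (deriv w) 0) / 6"
    by (simp add: taylor_coeff_def eval_nat_numeral)
qed

lemma log_gammas_of_deriv_frakB_comp:
  assumes "schwarz_function w" "\<And>z. z \<in> unit_disc \<Longrightarrow> deriv f z = frakB (w z)"
  shows "log_gamma1 f = deriv w 0 / 8"
    and "log_gamma2 f = (deriv (deriv w) 0 / 2) / 12 - 7 * (deriv w 0)\<^sup>2 / 192"
proof -
  have a2: "taylor_coeff f 2 = deriv w 0 / 4"
    and a3: "taylor_coeff f 3 = (deriv (deriv w) 0 / 2 - (deriv w 0)\<^sup>2 / 4) / 6"
    using taylor_coeffs_of_deriv_comp[OF frakB_holomorphic assms]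
    by (simp_all add: deriv_frakB_0 deriv2_frakB_0)
  show "log_gamma1 f = deriv w 0 / 8"
    by (simp add: log_gamma1_def a2)
  show "log_gamma2 f = (deriv (deriv w) 0 / 2) / 12 - 7 * (deriv w 0)\<^sup>2 / 192"
    by (simp add: log_gamma2_def a2 a3 field_simps power2_eq_square)
qed

lemma log_coeff_difference_upper_bound:
  fixes c1 c2 :: complex
  assumes "norm c2 \<le> 1 - norm c1 ^ 2"
  shows "norm (c2 / 12 - 7 * c1\<^sup>2 / 192) - norm (c1 / 8) \<le> 1 / 12"
proof -
  have "norm (c2 / 12 - 7 * c1\<^sup>2 / 192) \<le> norm c2 / 12 + 7 * norm c1 ^ 2 / 192"
    using norm_triangle_ineq4[of "c2 / 12" "7 * c1\<^sup>2 / 192"] by (simp add: norm_divide norm_power)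
  also have "\<dots> \<le> 1 / 12 - 9 * norm c1 ^ 2 / 192" using assms by simp
  finally have "norm (c2 / 12 - 7 * c1\<^sup>2 / 192) \<le> 1 / 12 - 9 * norm c1 ^ 2 / 192" .
  moreover have "norm (c1 / 8) = norm c1 / 8" by (simp add: norm_divide)
  ultimately show ?thesis using norm_ge_zero[of c1] zero_le_power2[of "norm c1"] by linarith
qed

lemma log_coeff_difference_lower_bound:
  fixes c1 c2 :: complex
  assumes "norm c2 \<le> 1 - norm c1 ^ 2"
  shows "- 1 / (2 * sqrt 23) \<le> norm (c2 / 12 - 7 * c1\<^sup>2 / 192) - norm (c1 / 8)"
proof -
  define x where "x = norm c1"
  define s where "s = sqrt 23"
  have s: "s\<^sup>2 = 23" "3 < s" by (simp_all add: s_def real_less_rsqrt)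
  have "x\<^sup>2 * 7 / 192 - norm c2 / 12 \<le> norm (c2 / 12 - 7 * c1\<^sup>2 / 192)"
    using norm_triangle_ineq3[of "7 * c1\<^sup>2 / 192" "c2 / 12"] norm_minus_commute[of "c2 / 12"]
    by (simp add: x_def norm_divide norm_power)
  then have lower: "(23 * x\<^sup>2 - 16) / 192 \<le> norm (c2 / 12 - 7 * c1\<^sup>2 / 192)"
    using assms by (simp add: x_def)
  have "- 1 / (2 * s) \<le> norm (c2 / 12 - 7 * c1\<^sup>2 / 192) - x / 8"
  proof (cases "x * s \<le> 4")
    case True
    then have "- 1 / (2 * s) \<le> - x / 8" using s by (simp add: field_simps)
    then show ?thesis using norm_ge_zero[of "c2 / 12 - 7 * c1\<^sup>2 / 192"] by linarith
  next
    case False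
    have "s * (23 * x\<^sup>2 - 24 * x - 16) + 96 = (x * s - 4) * (s * (x * s + 4) - 24)"
      using s(1) by (simp add: algebra_simps power2_eq_square power3_eq_cube)
    also have "\<dots> \<ge> 0"
    proof (rule mult_nonneg_nonneg)
      show "0 \<le> x * s - 4" using False by simp
      have "s * (x * s + 4) \<ge> s * 8" using False s(2) by (intro mult_left_mono) auto
      then show "0 \<le> s * (x * s + 4) - 24" using s(2) by linarith
    qed
    finally have "- 1 / (2 * s) \<le> (23 * x\<^sup>2 - 16) / 192 - x / 8"
      using s(2) by (simp add: field_simps)
    with lower show ?thesis by linarith
  qed
  then show ?thesis by (simp add: s_def x_def norm_divide)
qed

lemma schwarz_function_times_self_map:
  assumes "g holomorphic_on unit_disc" "g ` unit_disc \<subseteq> unit_disc"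
  shows "schwarz_function (\<lambda>z. z * g z)"
proof -
  have "norm (z * g z) < 1" if "norm z < 1" for z
  proof -
    have "norm (g z) < 1" using assms(2) that by (auto simp: image_subset_iff)
    with that have "norm z * norm (g z) < 1 * 1" by (intro mult_strict_mono) auto
    then show ?thesis by (simp add: norm_mult)
  qed
  with assms(1) show ?thesis by (auto simp: schwarz_function_def intro!: holomorphic_intros)
qed

lemma exists_class_BT_deriv_eq_frakB_comp:
  assumes "schwarz_function w"
  obtains f where "f \<in> class_BT" "\<And>z. z \<in> unit_disc \<Longrightarrow> deriv f z = frakB (w z)"
proof -
  have holw: "w holomorphic_on unit_disc" and w0: "w 0 = 0"
    and wd: "w ` unit_disc \<subseteq> unit_disc"
    using assms by (auto simp: schwarz_function_def)
  have "(frakB \<circ> w) holomorphic_on unit_disc"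
    using holomorphic_on_compose_gen[OF holw frakB_holomorphic wd] .
  then obtain g where g: "\<And>z. z \<in> unit_disc \<Longrightarrow> (g has_field_derivative frakB (w z)) (at z within unit_disc)"
    using holomorphic_convex_primitive'[OF convex_ball open_ball] by (metis comp_apply)
  define f where "f z = g z - g 0" for z
  have f': "(f has_field_derivative frakB (w z)) (at z)" if "z \<in> unit_disc" for z
    using g[OF that] at_within_open[OF that open_ball] unfolding f_def
    by (auto intro!: derivative_eq_intros)
  then have deriv_f: "deriv f z = frakB (w z)" if "z \<in> unit_disc" for z
    using that by (intro DERIV_imp_deriv)
  have "f holomorphic_on unit_disc"
    unfolding holomorphic_on_open[OF open_ball] using f' by blast
  moreover have "inj_on f unit_disc"
    using f' Re_frakB_pos wd by (intro inj_on_if_Re_deriv_pos[OF convex_ball]) (auto simp: image_subset_iff)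
  moreover have "f 0 = 0" "deriv f 0 = 1" by (simp_all add: f_def deriv_f w0)
  ultimately have "f \<in> class_BT"
    using assms deriv_f
    by (auto simp: class_BT_def class_S_def subordinate_iff_schwarz_function)
  with deriv_f show thesis using that by blast
qed

lemma log_gammas_class_BT:
  assumes "f \<in> class_BT"
  obtains c1 c2 :: complex where "norm c2 \<le> 1 - norm c1 ^ 2"
    "log_gamma1 f = c1 / 8" "log_gamma2 f = c2 / 12 - 7 * c1\<^sup>2 / 192"
proof -
  obtain w where w: "schwarz_function w" and f': "\<And>z. z \<in> unit_disc \<Longrightarrow> deriv f z = frakB (w z)"
    using assms by (auto simp: class_BT_def subordinate_iff_schwarz_function)
  show thesis
    using that[OF schwarz_function_second_coeff[OF w]] log_gammas_of_deriv_frakB_comp[OF w f'] by simp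
qed

lemma log_gamma_difference_attained:
  assumes "g holomorphic_on unit_disc" "g ` unit_disc \<subseteq> unit_disc"
  shows "\<exists>f\<in>class_BT. cmod (log_gamma2 f) - cmod (log_gamma1 f)
           = norm (deriv g 0 / 12 - 7 * (g 0)\<^sup>2 / 192) - norm (g 0 / 8)"
proof -
  note w = schwarz_function_times_self_map[OF assms]
  obtain f where f: "f \<in> class_BT" and f': "\<And>z. z \<in> unit_disc \<Longrightarrow> deriv f z = frakB (z * g z)"
    using exists_class_BT_deriv_eq_frakB_comp[OF w] by blast
  have \<gamma>: "log_gamma1 f = g 0 / 8" "log_gamma2 f = deriv g 0 / 12 - 7 * (g 0)\<^sup>2 / 192"
    using log_gammas_of_deriv_frakB_comp[OF w f'] deriv_times_id_0[OF open_ball _ assms(1), of "\<lambda>z. z * g z"]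
    by simp_all
  show ?thesis using f \<gamma> by (metis (no_types, lifting))
qed

lemma log_gamma_difference_attains_lower_bound:
  "\<exists>f\<in>class_BT. cmod (log_gamma2 f) - cmod (log_gamma1 f) = - 1 / (2 * sqrt 23)"
proof -
  define b :: real where "b = 4 / sqrt 23"
  have b: "b\<^sup>2 = 16 / 23" "0 < b" "b < 1"
    by (auto simp: b_def power_divide divide_less_eq real_less_rsqrt)
  define g where "g = Moebius_function 0 (- of_real b)"
  have "norm (- of_real b :: complex) < 1" using b by simp
  then have "g holomorphic_on unit_disc" "g ` unit_disc \<subseteq> unit_disc"
    using Moebius_function_holomorphic Moebius_function_norm_lt_1 by (auto simp: g_def)
  then obtain f where f: "f \<in> class_BT" and
    "cmod (log_gamma2 f) - cmod (log_gamma1 f) = norm (deriv g 0 / 12 - 7 * (g 0)\<^sup>2 / 192) - norm (g 0 / 8)"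
    using log_gamma_difference_attained by blast
  moreover have g0: "g 0 = of_real b" by (simp add: g_def Moebius_function_of_zero)
  moreover have "deriv g 0 = 1 - (of_real b)\<^sup>2"
    using DERIV_imp_deriv[OF Moebius_function_has_field_derivative[of "- of_real b" 0]]
    by (simp add: g_def power2_eq_square)
  moreover have "(of_real b :: complex)\<^sup>2 = 16 / 23" using b by (metis of_real_power of_real_divide of_real_numeral)
  ultimately have "cmod (log_gamma2 f) - cmod (log_gamma1 f) = - (b / 8)"
    using b by (simp add: norm_divide)
  with f show ?thesis by (auto simp: b_def)
qed

theorem theorem7p1:
  shows "(\<forall>f\<in>class_BT.
            - 1 / (2 * sqrt 23) \<le> cmod (log_gamma2 f) - cmod (log_gamma1 f) \<and>
            cmod (log_gamma2 f) - cmod (log_gamma1 f) \<le> 1 / 12)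
       \<and> (\<exists>f\<in>class_BT. cmod (log_gamma2 f) - cmod (log_gamma1 f) = 1 / 12)
       \<and> (\<exists>f\<in>class_BT. cmod (log_gamma2 f) - cmod (log_gamma1 f) = - 1 / (2 * sqrt 23))"
proof (intro conjI ballI)
  fix f assume "f \<in> class_BT"
  then obtain c1 c2 where c: "norm c2 \<le> 1 - norm c1 ^ 2"
    and \<gamma>: "log_gamma1 f = c1 / 8" "log_gamma2 f = c2 / 12 - 7 * c1\<^sup>2 / 192"
    by (rule log_gammas_class_BT)
  show "- 1 / (2 * sqrt 23) \<le> cmod (log_gamma2 f) - cmod (log_gamma1 f)"
    unfolding \<gamma> by (rule log_coeff_difference_lower_bound[OF c])
  show "cmod (log_gamma2 f) - cmod (log_gamma1 f) \<le> 1 / 12"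
    unfolding \<gamma> by (rule log_coeff_difference_upper_bound[OF c])
next
  show "\<exists>f\<in>class_BT. cmod (log_gamma2 f) - cmod (log_gamma1 f) = 1 / 12"
    using log_gamma_difference_attained[of "\<lambda>z. z"] by simp
next
  show "\<exists>f\<in>class_BT. cmod (log_gamma2 f) - cmod (log_gamma1 f) = - 1 / (2 * sqrt 23)"
    by (rule log_gamma_difference_attains_lower_bound)
qed

end
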